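(* For integers $k\ge0$ put $\zeta(-k|z)=-\frac{B_{k+1}(z)}{k+1}$, and for $r\ge2$ and integers $k_1,\ldots,k_r\ge0$ define recursively \[ \zeta(-k_1,\ldots,-k_r|z)=-\frac{1}{k_r+1}\zeta(-k_1,\ldots,-k_{r-2},-k_{r-1}-k_r-1|z)-\frac12\zeta(-k_1,\ldots,-k_{r-2},-k_{r-1}-k_r|z) \] \[ +\sum_{q=1}^{k_r}(-k_r)_q\frac{B_{q+1}}{(q+1)!}\zeta(-k_1,\ldots,-k_{r-2},-k_{r-1}-k_r+q|z), \] and let the depth-zero value be $1$. Then, up to addition of a function of period $1$, these are the solutions of the system of difference equations \[ V(-k_1,\ldots,-k_r|z+1)-V(-k_1,\ldots,-k_r|z)=-z^{k_1}V(-k_2,\ldots,-k_r|z+1)\qquad(r\ge1,\ k_j\ge0); \] that is, the polynomials $\zeta(-k_1,\ldots,-k_r|z)$ satisfy this system, and for each fixed tuple any solution $V(-k_1,\ldots,-k_r|z)$ of the equation with right-hand side $-z^{k_1}\zeta(-k_2,\ldots,-k_r|z+1)$ differs from $\zeta(-k_1,\ldots,-k_r|z)$ by a function of period $1$.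
   Context: $B_n(z)$ denotes the $n$-th Bernoulli polynomial and $B_n=B_n(0)$ the $n$-th Bernoulli number. $(a)_q=a(a+1)\cdots(a+q-1)$ is the Pochhammer symbol. For $r=2$ the prefix $-k_1,\ldots,-k_{r-2}$ is empty. *)

theory Defs
  imports Complex_Main
begin

text \<open>Bernoulli numbers with the convention B_1 = -1/2 (so that B_n = B_n(0)),
  via the standard recurrence sum_{k<=n} (n+1 choose k) B_k = 0 for n >= 1.\<close>
fun bernoulli :: "nat \<Rightarrow> real" where
  "bernoulli n = (if n = 0 then 1
     else - (\<Sum>k<n. of_nat (Suc n choose k) * bernoulli k) / of_nat (Suc n))"

declare bernoulli.simps [simp del]

definition bernpoly :: "nat \<Rightarrow> complex \<Rightarrow> complex" where
  "bernpoly n z = (\<Sum>k\<le>n. of_nat (n choose k) * of_real (bernoulli k) * z ^ (n - k))"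

text \<open>mzeta [k1,...,kr] z stands for zeta(-k1,...,-kr | z); depth zero value is 1.
  The recursion acts on the last two entries (k_{r-1}, k_r); the list is taken
  apart from the end via rev.\<close>
function mzeta :: "nat list \<Rightarrow> complex \<Rightarrow> complex" where
  "mzeta ks z = (case rev ks of
      [] \<Rightarrow> 1
    | [k] \<Rightarrow> - bernpoly (k + 1) z / of_nat (k + 1)
    | b # a # rpre \<Rightarrow>
        - mzeta (rev rpre @ [a + b + 1]) z / of_nat (b + 1)
        - mzeta (rev rpre @ [a + b]) z / 2
        + (\<Sum>q = 1..b. pochhammer (- of_nat b) q * of_real (bernoulli (q + 1))
                        / of_nat (fact (q + 1)) * mzeta (rev rpre @ [a + b - q]) z))"
  by pat_completeness auto
termination
  by (relation "measure (\<lambda>(ks, z). length ks)") (auto dest!: arg_cong[where f = length])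

end

theory Submission
  imports Defs "HOL-Computational_Algebra.Formal_Power_Series"
begin

unbundle fps_syntax

text \<open>The depth-one values are -B_{k+1}(z)/(k+1), whose difference in z is -z^k. The
  recursion in the last two arguments is a linear operator on functions of the
  second-to-last argument; applied to a \<mapsto> -z^a, it reproduces the Bernoulli expansion of
  z^a B_{b+1}(z+1)/(b+1), once (-b)_q B_{q+1}/(q+1)! is rewritten as
  -(b+1 choose q+1) B_{q+1}/(b+1) using that the odd Bernoulli numbers beyond B_1 vanish.\<close>

lemma bernoulli_recurrence:
  assumes "n \<ge> 1"
  shows "(\<Sum>k\<le>n. of_nat (Suc n choose k) * bernoulli k) = 0"
proof -
  have "of_nat (Suc n) * bernoulli n = - (\<Sum>k<n. of_nat (Suc n choose k) * bernoulli k)"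
    using assms by (subst bernoulli.simps) (simp add: field_simps)
  then show ?thesis
    by (simp add: lessThan_Suc_atMost[symmetric])
qed

lemma bernoulli_one: "bernoulli 1 = - 1 / 2"
  by (simp add: bernoulli.simps)

definition bernoulli_fps :: "complex fps" where
  "bernoulli_fps = Abs_fps (\<lambda>n. of_real (bernoulli n) / fact n)"

lemma bernoulli_fps_times_exp_minus_1: "bernoulli_fps * (fps_exp 1 - 1) = fps_X"
proof (rule fps_ext)
  fix m
  show "(bernoulli_fps * (fps_exp 1 - 1)) $ m = fps_X $ m"
  proof (cases m)
    case 0
    then show ?thesis by (simp add: bernoulli_fps_def)
  next
    case (Suc n)
    have "(bernoulli_fps * (fps_exp 1 - 1)) $ m
        = (\<Sum>i=0..Suc n. bernoulli_fps $ i * (fps_exp 1 - 1) $ (Suc n - i))"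
      by (simp add: fps_mult_nth Suc)
    also have "\<dots> = (\<Sum>i\<le>n. of_real (bernoulli i) / (fact i * fact (Suc n - i)))"
      by (simp add: bernoulli_fps_def atLeast0AtMost Suc_diff_le ac_simps)
    also have "\<dots> = of_real (\<Sum>i\<le>n. of_nat (Suc n choose i) * bernoulli i) / fact (Suc n)"
      unfolding of_real_sum sum_divide_distrib
    proof (intro sum.cong refl)
      fix i assume "i \<in> {..n}"
      then have "(of_nat (Suc n choose i) :: complex) = fact (Suc n) / (fact i * fact (Suc n - i))"
        by (intro binomial_fact) auto
      then show "of_real (bernoulli i) / (fact i * fact (Suc n - i))
          = (of_real (of_nat (Suc n choose i) * bernoulli i) :: complex) / fact (Suc n)"
        by (simp add: field_simps del: fact_Suc)
    qed
    also have "\<dots> = fps_X $ m"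
      using bernoulli_recurrence[of n] by (cases "n = 0") (simp_all add: Suc bernoulli.simps)
    finally show ?thesis .
  qed
qed

text \<open>With R(x) = B(-x) for the generating function B, both B and R - x solve
  (e^x - 1) y = x, so (-1)^n B_n = B_n for n \<ge> 2.\<close>

lemma bernoulli_odd_eq_0:
  assumes "odd n" "n \<ge> 3"
  shows "bernoulli n = 0"
proof -
  define B where "B = bernoulli_fps"
  define R :: "complex fps" where "R = Abs_fps (\<lambda>n. (-1)^n * of_real (bernoulli n) / fact n)"
  have "R * (fps_exp (-1) - 1) = - fps_X"
  proof (rule fps_ext)
    fix m
    have "(R * (fps_exp (-1) - 1)) $ m = (\<Sum>i=0..m. (-1)^m * (B $ i * (fps_exp 1 - 1) $ (m - i)))"
      unfolding fps_mult_nth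
    proof (intro sum.cong refl)
      fix i assume "i \<in> {0..m}"
      then have "(-1::complex)^m = (-1)^i * (-1)^(m-i)"
        by (simp add: power_add[symmetric])
      then show "R $ i * (fps_exp (-1) - 1) $ (m - i) = (-1)^m * (B $ i * (fps_exp 1 - 1) $ (m - i))"
        by (simp add: R_def B_def bernoulli_fps_def power_minus')
    qed
    also have "\<dots> = (-1)^m * (B * (fps_exp 1 - 1)) $ m"
      by (simp add: fps_mult_nth sum_distrib_left)
    also have "\<dots> = (- fps_X) $ m"
      by (simp add: B_def bernoulli_fps_times_exp_minus_1)
    finally show "(R * (fps_exp (-1) - 1)) $ m = (- fps_X) $ m" .
  qed
  moreover have "fps_exp (-1) * fps_exp (1::complex) = 1"
    by (simp add: fps_exp_add_mult[symmetric])
  ultimately have "R * (1 - fps_exp 1) = - fps_X * fps_exp 1"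
    by (metis (no_types, lifting) mult.assoc mult.commute mult.right_neutral
        right_diff_distrib')
  then have "(R - fps_X) * (fps_exp 1 - 1) = fps_X"
    by (simp add: algebra_simps)
  then have "(R - fps_X) * (fps_exp 1 - 1) = B * (fps_exp 1 - 1)"
    by (simp only: B_def bernoulli_fps_times_exp_minus_1)
  moreover have "fps_exp 1 - 1 \<noteq> (0::complex fps)"
    by simp
  ultimately have "(R - fps_X) $ n = B $ n"
    by simp
  with assms have "- of_real (bernoulli n) = (of_real (bernoulli n) :: complex)"
    by (simp add: R_def B_def bernoulli_fps_def)
  then show ?thesis by simp
qed

lemma bernpoly_egf: "Abs_fps (\<lambda>n. bernpoly n z / fact n) = bernoulli_fps * fps_exp z"
proof (rule fps_ext)
  fix n
  have "(bernoulli_fps * fps_exp z) $ n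
      = (\<Sum>i\<le>n. of_real (bernoulli i) / fact i * (z ^ (n - i) / fact (n - i)))"
    by (simp add: fps_mult_nth bernoulli_fps_def atLeast0AtMost)
  also have "\<dots> = (\<Sum>i\<le>n. of_nat (n choose i) * of_real (bernoulli i) * z ^ (n - i)) / fact n"
    unfolding sum_divide_distrib
  proof (intro sum.cong refl)
    fix i assume "i \<in> {..n}"
    then have "(of_nat (n choose i) :: complex) = fact n / (fact i * fact (n - i))"
      by (intro binomial_fact) auto
    then show "of_real (bernoulli i) / fact i * (z ^ (n - i) / fact (n - i))
        = of_nat (n choose i) * of_real (bernoulli i) * z ^ (n - i) / fact n"
      by (simp add: field_simps)
  qed
  finally show "Abs_fps (\<lambda>n. bernpoly n z / fact n) $ n = (bernoulli_fps * fps_exp z) $ n"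
    by (simp add: bernpoly_def)
qed

lemma bernpoly_Suc_diff: "bernpoly (Suc m) (z + 1) - bernpoly (Suc m) z = of_nat (Suc m) * z ^ m"
proof -
  have "bernoulli_fps * fps_exp (z + 1) - bernoulli_fps * fps_exp z
      = (bernoulli_fps * (fps_exp 1 - 1)) * fps_exp z"
    by (simp add: fps_exp_add_mult algebra_simps)
  then have "bernoulli_fps * fps_exp (z + 1) - bernoulli_fps * fps_exp z = fps_X * fps_exp z"
    by (simp only: bernoulli_fps_times_exp_minus_1)
  then have "(bernoulli_fps * fps_exp (z + 1) - bernoulli_fps * fps_exp z) $ Suc m
      = (fps_X * fps_exp z) $ Suc m"
    by simp
  then have "(bernpoly (Suc m) (z + 1) - bernpoly (Suc m) z) / fact (Suc m) = z ^ m / fact m"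
    by (simp only: fps_sub_nth bernpoly_egf[symmetric] fps_nth_Abs_fps fps_X_mult_nth)
      (simp add: diff_divide_distrib)
  then have "bernpoly (Suc m) (z + 1) - bernpoly (Suc m) z = z ^ m / fact m * fact (Suc m)"
    by (simp add: divide_eq_eq del: fact_Suc)
  then show ?thesis
    by simp
qed

lemma pochhammer_bernoulli_coeff:
  assumes "1 \<le> q" "q \<le> b"
  shows "pochhammer (- of_nat b) q * of_real (bernoulli (q + 1)) / of_nat (fact (q + 1))
       = - (of_nat (Suc b choose Suc q) * of_real (bernoulli (Suc q)) / of_nat (Suc b) :: complex)"
proof (cases "even q")
  case True
  then have "bernoulli (q + 1) = 0"
    using assms by (intro bernoulli_odd_eq_0) auto
  then show ?thesis by simp
next
  case False
  have "pochhammer (- of_nat b) q = (- 1) ^ q * fact q * (of_nat b gchoose q :: complex)"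
    by (simp add: gbinomial_pochhammer)
  then have pochhammer: "pochhammer (- of_nat b) q = - fact q * (of_nat (b choose q) :: complex)"
    using False by (simp add: binomial_gbinomial)
  have "of_nat (Suc q) * (of_nat (Suc b choose Suc q) :: complex) = of_nat (Suc b) * of_nat (b choose q)"
    using arg_cong[OF Suc_times_binomial[of q b], of "of_nat :: nat \<Rightarrow> complex"]
    by (simp only: of_nat_mult)
  then have binomial: "(of_nat (Suc b choose Suc q) :: complex)
      = of_nat (Suc b) * of_nat (b choose q) / of_nat (Suc q)"
    by (simp add: eq_divide_eq mult.commute del: of_nat_Suc binomial_Suc_Suc)
  have "(of_nat (fact (q + 1)) :: complex) = of_nat (Suc q) * fact q"
    by (simp add: algebra_simps)
  then show ?thesis
    unfolding pochhammer binomial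
    by (simp add: field_simps del: of_nat_Suc binomial_Suc_Suc fact_Suc)
qed

definition zeta_step :: "nat \<Rightarrow> (nat \<Rightarrow> complex) \<Rightarrow> nat \<Rightarrow> complex" where
  "zeta_step b f a = - f (a + b + 1) / of_nat (b + 1) - f (a + b) / 2
     + (\<Sum>q = 1..b. pochhammer (- of_nat b) q * of_real (bernoulli (q + 1))
                        / of_nat (fact (q + 1)) * f (a + b - q))"

lemma zeta_step_diff: "zeta_step b (\<lambda>m. f m - g m) a = zeta_step b f a - zeta_step b g a"
  by (simp add: zeta_step_def sum_subtractf algebra_simps diff_divide_distrib)

lemma zeta_step_mult: "zeta_step b (\<lambda>m. c * f m) a = c * zeta_step b f a"
  by (simp add: zeta_step_def sum_distrib_left algebra_simps)

lemma zeta_step_neg_power_0: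
  "zeta_step b (\<lambda>m. - (z ^ m)) 0 = bernpoly (Suc b) (z + 1) / of_nat (Suc b)"
proof -
  define S where
    "S = (\<Sum>q=1..b. of_nat (Suc b choose Suc q) * of_real (bernoulli (Suc q)) * z ^ (b - q))"
  have "bernpoly (Suc b) z = z ^ Suc b +
      (\<Sum>i\<le>b. of_nat (Suc b choose Suc i) * of_real (bernoulli (Suc i)) * z ^ (b - i))"
    unfolding bernpoly_def by (subst sum.atMost_Suc_shift) (simp add: bernoulli.simps)
  also have "(\<Sum>i\<le>b. of_nat (Suc b choose Suc i) * of_real (bernoulli (Suc i)) * z ^ (b - i))
      = of_nat (Suc b) * of_real (bernoulli 1) * z ^ b + S"
    unfolding S_def atMost_atLeast0 by (subst sum.atLeast_Suc_atMost) simp_all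
  finally have bernpoly_z:
      "bernpoly (Suc b) z = z ^ Suc b + of_nat (Suc b) * of_real (bernoulli 1) * z ^ b + S"
    by simp
  have "(\<Sum>q = 1..b. pochhammer (- of_nat b) q * of_real (bernoulli (q + 1))
        / of_nat (fact (q + 1)) * - (z ^ (0 + b - q)))
      = (\<Sum>q = 1..b. of_nat (Suc b choose Suc q) * of_real (bernoulli (Suc q)) * z ^ (b - q)
        / of_nat (Suc b))"
    by (intro sum.cong refl) (subst pochhammer_bernoulli_coeff; simp)
  then have "zeta_step b (\<lambda>m. - (z ^ m)) 0
      = z ^ Suc b / of_nat (Suc b) + z ^ b / 2 + S / of_nat (Suc b)"
    unfolding zeta_step_def S_def sum_divide_distrib by simp
  also have "\<dots> = (bernpoly (Suc b) z + of_nat (Suc b) * z ^ b) / of_nat (Suc b)"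
    unfolding bernpoly_z bernoulli_one by (simp add: field_simps del: of_nat_Suc)
  also have "\<dots> = bernpoly (Suc b) (z + 1) / of_nat (Suc b)"
    using bernpoly_Suc_diff[of b z] by (simp add: algebra_simps)
  finally show ?thesis .
qed

lemma zeta_step_neg_power:
  "zeta_step b (\<lambda>m. - (z ^ m)) a = z ^ a * (bernpoly (Suc b) (z + 1) / of_nat (Suc b))"
proof -
  have "zeta_step b (\<lambda>m. - (z ^ m)) a = zeta_step b (\<lambda>m. z ^ a * - (z ^ m)) 0"
    unfolding zeta_step_def
    by (intro arg_cong2[where f = "(+)"] arg_cong2[where f = "(-)"] sum.cong)
      (auto simp: power_add[symmetric] add.commute)
  then show ?thesis
    by (simp only: zeta_step_mult zeta_step_neg_power_0)
qed

declare mzeta.simps [simp del]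

lemma mzeta_Nil: "mzeta [] z = 1"
  by (subst mzeta.simps) simp

lemma mzeta_single: "mzeta [k] z = - bernpoly (k + 1) z / of_nat (k + 1)"
  by (subst mzeta.simps) simp

lemma mzeta_append_two: "mzeta (ks @ [a, b]) z = zeta_step b (\<lambda>m. mzeta (ks @ [m]) z) a"
  by (subst mzeta.simps) (simp add: zeta_step_def)

lemma mzeta_single_diff: "mzeta [k] (z + 1) - mzeta [k] z = - (z ^ k)"
proof -
  have "mzeta [k] (z + 1) - mzeta [k] z
      = - (bernpoly (Suc k) (z + 1) - bernpoly (Suc k) z) / of_nat (Suc k)"
    by (simp add: mzeta_single diff_divide_distrib)
  then show ?thesis
    by (simp only: bernpoly_Suc_diff) (simp del: of_nat_Suc)
qed

lemma mzeta_diff: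
  assumes "ks \<noteq> []"
  shows "mzeta ks (z + 1) - mzeta ks z = - (z ^ hd ks) * mzeta (tl ks) (z + 1)"
  using assms
proof (induction "length ks" arbitrary: ks z rule: less_induct)
  case less
  obtain init b where ks: "ks = init @ [b]"
    using less.prems by (cases ks rule: rev_exhaust) auto
  show ?case
  proof (cases init rule: rev_exhaust)
    case Nil
    then show ?thesis
      by (simp add: ks mzeta_single_diff mzeta_Nil)
  next
    case (snoc pre a)
    then have ks: "ks = pre @ [a, b]"
      by (simp add: ks)
    have diff: "mzeta ks (z + 1) - mzeta ks z
        = zeta_step b (\<lambda>m. mzeta (pre @ [m]) (z + 1) - mzeta (pre @ [m]) z) a"
      unfolding ks mzeta_append_two zeta_step_diff ..
    show ?thesis
    proof (cases pre)
      case Nil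
      have "mzeta ks (z + 1) - mzeta ks z = zeta_step b (\<lambda>m. - (z ^ m)) a"
        unfolding diff Nil by (simp only: append_Nil mzeta_single_diff)
      then show ?thesis
        by (simp add: ks Nil zeta_step_neg_power mzeta_single)
    next
      case (Cons h pre')
      have "mzeta (pre @ [m]) (z + 1) - mzeta (pre @ [m]) z
          = - (z ^ h) * mzeta (pre' @ [m]) (z + 1)" for m
        using less.hyps[of "pre @ [m]"] by (simp add: ks Cons)
      then have "mzeta ks (z + 1) - mzeta ks z
          = zeta_step b (\<lambda>m. - (z ^ h) * mzeta (pre' @ [m]) (z + 1)) a"
        by (simp only: diff)
      also have "\<dots> = - (z ^ h) * zeta_step b (\<lambda>m. mzeta (pre' @ [m]) (z + 1)) a"
        by (rule zeta_step_mult)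
      finally show ?thesis
        by (simp add: ks Cons mzeta_append_two)
    qed
  qed
qed

lemma same_difference_imp_periodic_offset:
  fixes V W :: "'a :: {plus, one} \<Rightarrow> 'b :: ab_group_add"
  assumes "\<And>z. V (z + 1) - V z = W (z + 1) - W z"
  shows "\<exists>p. (\<forall>z. p (z + 1) = p z) \<and> (\<forall>z. V z = W z + p z)"
proof (intro exI conjI allI)
  fix z
  show "V (z + 1) - W (z + 1) = V z - W z"
    using assms[of z] by (simp add: algebra_simps)
  show "V z = W z + (V z - W z)"
    by simp
qed

theorem theorem3p1:
  shows "(\<forall>ks z. ks \<noteq> [] \<longrightarrow>
            mzeta ks (z + 1) - mzeta ks z = - (z ^ hd ks) * mzeta (tl ks) (z + 1))
       \<and> (\<forall>ks (V :: complex \<Rightarrow> complex). ks \<noteq> [] \<longrightarrow>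
            (\<forall>z. V (z + 1) - V z = - (z ^ hd ks) * mzeta (tl ks) (z + 1)) \<longrightarrow>
            (\<exists>p :: complex \<Rightarrow> complex. (\<forall>z. p (z + 1) = p z) \<and> (\<forall>z. V z = mzeta ks z + p z)))"
proof (intro conjI allI impI)
  fix ks :: "nat list" and z :: complex
  assume "ks \<noteq> []"
  then show "mzeta ks (z + 1) - mzeta ks z = - (z ^ hd ks) * mzeta (tl ks) (z + 1)"
    by (rule mzeta_diff)
next
  fix ks :: "nat list" and V :: "complex \<Rightarrow> complex"
  assume "ks \<noteq> []" and "\<forall>z. V (z + 1) - V z = - (z ^ hd ks) * mzeta (tl ks) (z + 1)"
  then show "\<exists>p. (\<forall>z. p (z + 1) = p z) \<and> (\<forall>z. V z = mzeta ks z + p z)"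
    by (intro same_difference_imp_periodic_offset) (simp add: mzeta_diff)
qed

end
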